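(* Consider the system of ordinary differential equations \[ \dot u=r_{1}u(1-u)-a_{12}uv-a_{13}uw,\qquad \dot v=r_{2}v(1-v)+a_{21}uv,\qquad \dot w=-\mu w+a_{31}uw, \] with all parameters $r_1,r_2,\mu,a_{12},a_{13},a_{21},a_{31}$ positive. If $r_1\le a_{12}$, then every solution with positive initial data $u(0),v(0),w(0)>0$ satisfies $\lim_{t\to\infty}u(t)=0$ and $\lim_{t\to\infty}w(t)=0$. *)

theory Defs
  imports "HOL-Analysis.Analysis"
begin

end

theory Submission
  imports Defs
begin

(*
  Each species obeys x' = x g with g continuous, so positive data stay positive.
  All limits come from one comparison principle: if eventually f' >= beta - alpha f, then
  (f - beta/alpha) e^(alpha t) is eventually nondecreasing, so f > beta/alpha - eps eventually.
  Applied to 1/v, whose derivative is at most r2 (1 - 1/v), it gives v > 1 - delta eventually.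
  Then (1/u)' = r1 + (a12 v + a13 w - r1)/u >= r1 - a12 delta/u because r1 <= a12, so 1/u
  eventually exceeds r1/(a12 delta) - 1, which is arbitrarily large: u tends to 0.
  Once u < mu/(2 a31), we have w' <= -(mu/2) w, and w tends to 0 as well.
*)

lemma at_within_Ici_eq_at:
  fixes t :: real
  assumes "a < t"
  shows "at t within {a..} = at t"
  by (rule at_within_open_subset[of _ "{a<..}"]) (use assms in auto)

lemma pos_if_DERIV_eq_mult:
  fixes x g :: "real \<Rightarrow> real"
  assumes deriv: "\<And>t. t \<ge> 0 \<Longrightarrow> (x has_real_derivative x t * g t) (at t within {0..})"
    and cont: "continuous_on {0..} g" and "x 0 > 0" and "t \<ge> 0"
  shows "x t > 0"
proof -
  define G where "G s = integral {0..s} g" for s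
  have "((\<lambda>s. x s * exp (- G s)) has_real_derivative 0) (at s within {0..t})"
    if s: "s \<in> {0..t}" for s
  proof -
    have dG: "(G has_real_derivative g s) (at s within {0..t})"
      unfolding G_def by (rule integral_has_real_derivative[OF continuous_on_subset[OF cont] s]) auto
    have dx: "(x has_real_derivative x s * g s) (at s within {0..t})"
      by (rule has_field_derivative_subset[OF deriv]) (use s in auto)
    show ?thesis
      using DERIV_mult[OF dx DERIV_exp[THEN DERIV_chain2, OF DERIV_minus[OF dG]]]
      by (simp add: algebra_simps)
  qed
  from has_field_derivative_zero_constant[OF _ this]
  obtain c where "\<forall>s\<in>{0..t}. x s * exp (- G s) = c"
    by auto
  then have "x t * exp (- G t) = x 0 * exp (- G 0)"
    using \<open>t \<ge> 0\<close> by auto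
  then have "x t * exp (- G t) > 0"
    using \<open>x 0 > 0\<close> by simp
  then show ?thesis
    by (simp add: zero_less_mult_iff)
qed

lemma DERIV_inverse_if_DERIV_mult:
  fixes x :: "real \<Rightarrow> real"
  assumes "(x has_real_derivative x t * g) (at t)" and "x t \<noteq> 0"
  shows "((\<lambda>s. inverse (x s)) has_real_derivative - g * inverse (x t)) (at t)"
  using DERIV_inverse_fun[OF assms] assms(2) by (simp add: power2_eq_square field_simps)

lemma DERIV_ge_linear_imp_eventually_gt:
  fixes f f' :: "real \<Rightarrow> real"
  assumes "\<alpha> > 0" "\<epsilon> > 0"
    and "\<forall>\<^sub>F t in at_top. (f has_real_derivative f' t) (at t) \<and> \<beta> - \<alpha> * f t \<le> f' t"
  shows "\<forall>\<^sub>F t in at_top. \<beta> / \<alpha> - \<epsilon> < f t"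
proof -
  obtain T where T: "\<And>t. t \<ge> T \<Longrightarrow> (f has_real_derivative f' t) (at t) \<and> \<beta> - \<alpha> * f t \<le> f' t"
    using assms(3) by (auto simp: eventually_at_top_linorder)
  define g where "g t = (f t - \<beta> / \<alpha>) * exp (\<alpha> * t)" for t
  have g_mono: "g T \<le> g t" if "T \<le> t" for t
  proof (rule deriv_nonneg_imp_mono[where g' = "\<lambda>s. (f' s - (\<beta> - \<alpha> * f s)) * exp (\<alpha> * s)", OF _ _ that])
    fix s assume "s \<in> {T..t}"
    then have "(f has_real_derivative f' s) (at s)" "\<beta> - \<alpha> * f s \<le> f' s"
      using T by auto
    then show "(g has_real_derivative (f' s - (\<beta> - \<alpha> * f s)) * exp (\<alpha> * s)) (at s)"
      unfolding g_def using \<open>\<alpha> > 0\<close> by (auto intro!: derivative_eq_intros simp: field_simps)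
    show "(f' s - (\<beta> - \<alpha> * f s)) * exp (\<alpha> * s) \<ge> 0"
      using \<open>\<beta> - \<alpha> * f s \<le> f' s\<close> by simp
  qed
  have "filterlim (\<lambda>t. - \<alpha> * t) at_bot at_top"
    by (rule filterlim_tendsto_neg_mult_at_bot[OF tendsto_const]) (use assms in \<open>auto intro: filterlim_ident\<close>)
  then have "((\<lambda>t. g T * exp (- \<alpha> * t)) \<longlongrightarrow> g T * 0) at_top"
    by (intro tendsto_mult tendsto_const filterlim_compose[OF exp_at_bot])
  then have "\<forall>\<^sub>F t in at_top. - \<epsilon> < g T * exp (- \<alpha> * t)"
    using \<open>\<epsilon> > 0\<close> by (intro order_tendstoD(1)) auto
  then show ?thesis
    using eventually_ge_at_top[of T]
  proof eventually_elim
    case (elim t)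
    have "g T * exp (- \<alpha> * t) \<le> g t * exp (- \<alpha> * t)"
      using g_mono[OF elim(2)] by simp
    also have "\<dots> = (f t - \<beta> / \<alpha>) * (exp (\<alpha> * t) * exp (- \<alpha> * t))"
      by (simp only: g_def mult.assoc)
    also have "\<dots> = f t - \<beta> / \<alpha>"
      by (simp only: mult_minus_left exp_minus_inverse mult_1_right)
    finally show ?case
      using elim(1) by linarith
  qed
qed

lemma DERIV_le_linear_imp_eventually_lt:
  fixes f f' :: "real \<Rightarrow> real"
  assumes "\<alpha> > 0" "\<epsilon> > 0"
    and "\<forall>\<^sub>F t in at_top. (f has_real_derivative f' t) (at t) \<and> f' t \<le> \<beta> - \<alpha> * f t"
  shows "\<forall>\<^sub>F t in at_top. f t < \<beta> / \<alpha> + \<epsilon>"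
proof -
  have "\<forall>\<^sub>F t in at_top. ((\<lambda>t. - f t) has_real_derivative - f' t) (at t) \<and> - \<beta> - \<alpha> * (- f t) \<le> - f' t"
    using assms(3) by eventually_elim (auto intro: DERIV_minus)
  from DERIV_ge_linear_imp_eventually_gt[OF assms(1,2) this] show ?thesis
    by eventually_elim linarith
qed

locale prey_two_predators =
  fixes r1 r2 \<mu> a12 a13 a21 a31 :: real
    and u v w :: "real \<Rightarrow> real"
  assumes params: "r1 > 0" "r2 > 0" "\<mu> > 0" "a12 > 0" "a13 > 0" "a21 > 0" "a31 > 0"
    and du: "\<And>t. t \<ge> 0 \<Longrightarrow>
       (u has_real_derivative (r1 * u t * (1 - u t) - a12 * u t * v t - a13 * u t * w t)) (at t within {0..})"
    and dv: "\<And>t. t \<ge> 0 \<Longrightarrow>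
       (v has_real_derivative (r2 * v t * (1 - v t) + a21 * u t * v t)) (at t within {0..})"
    and dw: "\<And>t. t \<ge> 0 \<Longrightarrow>
       (w has_real_derivative (- \<mu> * w t + a31 * u t * w t)) (at t within {0..})"
    and init: "u 0 > 0" "v 0 > 0" "w 0 > 0"
begin

lemma continuous_on_u: "continuous_on {0..} u"
  by (rule DERIV_continuous_on[OF du]) simp

lemma continuous_on_v: "continuous_on {0..} v"
  by (rule DERIV_continuous_on[OF dv]) simp

lemma continuous_on_w: "continuous_on {0..} w"
  by (rule DERIV_continuous_on[OF dw]) simp

lemma u_DERIV_per_capita:
  "t \<ge> 0 \<Longrightarrow> (u has_real_derivative u t * (r1 * (1 - u t) - a12 * v t - a13 * w t)) (at t within {0..})"
  by (rule DERIV_cong[OF du]) (simp_all add: algebra_simps)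

lemma v_DERIV_per_capita:
  "t \<ge> 0 \<Longrightarrow> (v has_real_derivative v t * (r2 * (1 - v t) + a21 * u t)) (at t within {0..})"
  by (rule DERIV_cong[OF dv]) (simp_all add: algebra_simps)

lemma w_DERIV_per_capita:
  "t \<ge> 0 \<Longrightarrow> (w has_real_derivative w t * (a31 * u t - \<mu>)) (at t within {0..})"
  by (rule DERIV_cong[OF dw]) (simp_all add: algebra_simps)

lemma u_pos: "t \<ge> 0 \<Longrightarrow> u t > 0"
  using continuous_on_u continuous_on_v continuous_on_w
  by (intro pos_if_DERIV_eq_mult[OF u_DERIV_per_capita _ init(1)] continuous_intros)

lemma v_pos: "t \<ge> 0 \<Longrightarrow> v t > 0"
  using continuous_on_u continuous_on_v
  by (intro pos_if_DERIV_eq_mult[OF v_DERIV_per_capita _ init(2)] continuous_intros)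

lemma w_pos: "t \<ge> 0 \<Longrightarrow> w t > 0"
  using continuous_on_u
  by (intro pos_if_DERIV_eq_mult[OF w_DERIV_per_capita _ init(3)] continuous_intros)

lemma v_DERIV_at: "t > 0 \<Longrightarrow> (v has_real_derivative v t * (r2 * (1 - v t) + a21 * u t)) (at t)"
  using v_DERIV_per_capita[of t] by (simp add: at_within_Ici_eq_at)

lemma eventually_inverse_v_lt:
  assumes "\<epsilon> > 0"
  shows "\<forall>\<^sub>F t in at_top. inverse (v t) < 1 + \<epsilon>"
proof -
  have "\<forall>\<^sub>F t in at_top.
      ((\<lambda>t. inverse (v t)) has_real_derivative - (r2 * (1 - v t) + a21 * u t) * inverse (v t)) (at t)
      \<and> - (r2 * (1 - v t) + a21 * u t) * inverse (v t) \<le> r2 - r2 * inverse (v t)"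
    using eventually_gt_at_top[of 0]
  proof eventually_elim
    case (elim t)
    then have "u t > 0" "v t > 0"
      using u_pos v_pos by auto
    then show ?case
      using DERIV_inverse_if_DERIV_mult[OF v_DERIV_at[OF elim]] params
      by (simp add: field_simps)
  qed
  from DERIV_le_linear_imp_eventually_lt[OF params(2) assms this] show ?thesis
    using params(2) by simp
qed

lemma u_DERIV_at:
  "t > 0 \<Longrightarrow> (u has_real_derivative u t * (r1 * (1 - u t) - a12 * v t - a13 * w t)) (at t)"
  using u_DERIV_per_capita[of t] by (simp add: at_within_Ici_eq_at)

lemma u_tendsto_0:
  assumes "r1 \<le> a12"
  shows "(u \<longlongrightarrow> 0) at_top"
proof -
  have "filterlim (\<lambda>t. inverse (u t)) at_top at_top"
    unfolding filterlim_at_top_gt[where c = 0]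
  proof (intro allI impI)
    fix Z :: real
    assume "Z > 0"
    define \<delta> where "\<delta> = r1 / (a12 * (Z + 1))"
    have "\<delta> > 0"
      using \<open>Z > 0\<close> params by (simp add: \<delta>_def)
    have "\<forall>\<^sub>F t in at_top.
        ((\<lambda>t. inverse (u t)) has_real_derivative
           - (r1 * (1 - u t) - a12 * v t - a13 * w t) * inverse (u t)) (at t)
        \<and> r1 - a12 * \<delta> * inverse (u t) \<le> - (r1 * (1 - u t) - a12 * v t - a13 * w t) * inverse (u t)"
      using eventually_inverse_v_lt[OF \<open>\<delta> > 0\<close>] eventually_gt_at_top[of 0]
    proof eventually_elim
      case (elim t)
      then have pos: "u t > 0" "v t > 0" "w t > 0"
        using u_pos v_pos w_pos by auto
      have "1 < v t + \<delta> * v t"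
        using elim(1) pos(2) by (simp add: field_simps)
      have "1 - \<delta> < v t"
      proof (cases "v t \<le> 1")
        case True
        then have "\<delta> * v t \<le> \<delta>"
          using \<open>\<delta> > 0\<close> pos(2) by (simp add: mult_left_le)
        with \<open>1 < v t + \<delta> * v t\<close> show ?thesis
          by linarith
      qed (use \<open>\<delta> > 0\<close> in linarith)
      then have "a12 * (1 - \<delta>) < a12 * v t"
        using params(4) by simp
      then have bound: "- a12 * \<delta> \<le> a12 * v t + a13 * w t - r1"
        using assms mult_pos_pos[OF params(5) pos(3)] by (simp add: right_diff_distrib)
      have "- a12 * \<delta> * inverse (u t) \<le> (a12 * v t + a13 * w t - r1) * inverse (u t)"
        by (rule mult_right_mono[OF bound]) (use pos(1) in simp)
      moreover have "- (r1 * (1 - u t) - a12 * v t - a13 * w t) * inverse (u t)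
          = r1 + (a12 * v t + a13 * w t - r1) * inverse (u t)"
        using pos(1) by (simp add: field_simps)
      ultimately show ?case
        using DERIV_inverse_if_DERIV_mult[OF u_DERIV_at[OF elim(2)]] pos(1) by simp
    qed
    from DERIV_ge_linear_imp_eventually_gt[OF mult_pos_pos[OF params(4) \<open>\<delta> > 0\<close>] zero_less_one this]
    have "\<forall>\<^sub>F t in at_top. r1 / (a12 * \<delta>) - 1 < inverse (u t)" .
    moreover have "r1 / (a12 * \<delta>) - 1 = Z"
      using \<open>Z > 0\<close> params by (simp add: \<delta>_def field_simps)
    ultimately show "\<forall>\<^sub>F t in at_top. Z \<le> inverse (u t)"
      by (simp add: eventually_mono)
  qed
  from tendsto_inverse_0_at_top[OF this] show ?thesis
    by simp
qed

lemma w_DERIV_at: "t > 0 \<Longrightarrow> (w has_real_derivative w t * (a31 * u t - \<mu>)) (at t)"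
  using w_DERIV_per_capita[of t] by (simp add: at_within_Ici_eq_at)

lemma w_tendsto_0:
  assumes "(u \<longlongrightarrow> 0) at_top"
  shows "(w \<longlongrightarrow> 0) at_top"
proof (rule order_tendstoI)
  fix a :: real
  assume "a < 0"
  show "\<forall>\<^sub>F t in at_top. a < w t"
    using eventually_ge_at_top[of 0] by eventually_elim (use \<open>a < 0\<close> w_pos in force)
next
  fix \<epsilon> :: real
  assume "\<epsilon> > 0"
  have "\<forall>\<^sub>F t in at_top. u t < \<mu> / (2 * a31)"
    using order_tendstoD(2)[OF assms] params by simp
  then have "\<forall>\<^sub>F t in at_top. (w has_real_derivative w t * (a31 * u t - \<mu>)) (at t)
      \<and> w t * (a31 * u t - \<mu>) \<le> 0 - \<mu> / 2 * w t"
    using eventually_gt_at_top[of 0]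
  proof eventually_elim
    case (elim t)
    then have "a31 * u t - \<mu> \<le> - \<mu> / 2"
      using params(7) by (simp add: field_simps)
    then have "w t * (a31 * u t - \<mu>) \<le> w t * (- \<mu> / 2)"
      using w_pos[of t] elim(2) by (intro mult_left_mono) auto
    then show ?case
      using w_DERIV_at[OF elim(2)] by (simp add: algebra_simps)
  qed
  from DERIV_le_linear_imp_eventually_lt[OF _ \<open>\<epsilon> > 0\<close> this]
  show "\<forall>\<^sub>F t in at_top. w t < \<epsilon>"
    using params(3) by simp
qed

end

theorem lemma2:
  fixes r1 r2 \<mu> a12 a13 a21 a31 :: real
    and u v w :: "real \<Rightarrow> real"
  assumes params: "r1 > 0" "r2 > 0" "\<mu> > 0" "a12 > 0" "a13 > 0" "a21 > 0" "a31 > 0"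
    and hr: "r1 \<le> a12"
    and du: "\<And>t. t \<ge> 0 \<Longrightarrow>
       (u has_real_derivative (r1 * u t * (1 - u t) - a12 * u t * v t - a13 * u t * w t)) (at t within {0..})"
    and dv: "\<And>t. t \<ge> 0 \<Longrightarrow>
       (v has_real_derivative (r2 * v t * (1 - v t) + a21 * u t * v t)) (at t within {0..})"
    and dw: "\<And>t. t \<ge> 0 \<Longrightarrow>
       (w has_real_derivative (- \<mu> * w t + a31 * u t * w t)) (at t within {0..})"
    and init: "u 0 > 0" "v 0 > 0" "w 0 > 0"
  shows "(u \<longlongrightarrow> 0) at_top \<and> (w \<longlongrightarrow> 0) at_top"
proof -
  interpret prey_two_predators r1 r2 \<mu> a12 a13 a21 a31 u v w
    using params du dv dw init by unfold_locales
  have "(u \<longlongrightarrow> 0) at_top"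
    using hr by (rule u_tendsto_0)
  then show ?thesis
    using w_tendsto_0 by blast
qed

end
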